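(* Let $\boldsymbol{R}=[r_{ij}]\in\mathbb{C}^{N\times N}$ be Hermitian. Define $\delta_1=0$ and $\delta_k=\sum_{i=1}^{k-1}|r_{ki}|$ for $k=2,\ldots,N$. Define $a_k=2\delta_k+4\sum_{i=1}^{N-k}\delta_{k+i}$ for $k=1,\ldots,N-1$ and $a_N=2\delta_N$. Let $\overline{\boldsymbol{R}}$ be the matrix obtained from $\boldsymbol{R}$ by replacing its diagonal entries with $a_1,\ldots,a_N$, i.e. $\overline{\boldsymbol{R}}=\boldsymbol{R}-\mathrm{Diag}(\boldsymbol{R})+\mathrm{diag}(a_1,\ldots,a_N)$. For $1\le k\le N$ let $\overline{\boldsymbol{R}}_k$ be the principal submatrix of $\overline{\boldsymbol{R}}$ formed by its first $k$ rows and first $k$ columns, and define $F:A^*\to\mathbb{R}$ by $F(A)=A^H\overline{\boldsymbol{R}}_kA$ for $A=(s_1,\ldots,s_k)\in A^*$ (viewed as a column vector). Then for any $1\le k\le l\le N$ and any $b_1,\ldots,b_l\in\Omega$, with $B=(b_1,\ldots,b_k)$ and $A=(b_1,\ldots,b_l)$, \[ 4\sum_{i=k+1}^{l}\sum_{j=1}^{N-i}\delta_{i+j}\ \le\ F(A)-F(B)\ \le\ 4\sum_{i=k+1}^{l}\Big(\delta_i+\sum_{j=1}^{N-i}\delta_{i+j}\Big). \]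
   Context: $\Omega=\{x\in\mathbb{C}:|x|=1\}$. $A^*=\{(s_1,\ldots,s_k): s_i\in\Omega \text{ for } i=1,\ldots,k,\ k=1,\ldots,N\}$ is the set of all unimodular strings of length between $1$ and $N$. $\mathrm{Diag}(\boldsymbol{R})$ is the diagonal matrix with the same diagonal entries as $\boldsymbol{R}$, and $\mathrm{diag}(a_1,\ldots,a_N)$ is the diagonal matrix with diagonal entries $a_1,\ldots,a_N$. Empty sums are zero. *)

theory Defs
  imports "HOL-Analysis.Analysis"
begin

text \<open>Matrices of size N are represented as functions nat => nat => complex,
  indexed 1-based over 1..N.  Strings (s_1,...,s_k) are functions nat => complex
  with positions 1..k.\<close>

definition hermitian_mat :: "nat \<Rightarrow> (nat \<Rightarrow> nat \<Rightarrow> complex) \<Rightarrow> bool" where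
  "hermitian_mat N R \<longleftrightarrow> (\<forall>i\<in>{1..N}. \<forall>j\<in>{1..N}. R i j = cnj (R j i))"

definition delta :: "(nat \<Rightarrow> nat \<Rightarrow> complex) \<Rightarrow> nat \<Rightarrow> real" where
  "delta R k = (\<Sum>i=1..<k. cmod (R k i))"

definition acoef :: "nat \<Rightarrow> (nat \<Rightarrow> nat \<Rightarrow> complex) \<Rightarrow> nat \<Rightarrow> real" where
  "acoef N R k = 2 * delta R k + 4 * (\<Sum>i=1..N-k. delta R (k + i))"

definition Rbar :: "nat \<Rightarrow> (nat \<Rightarrow> nat \<Rightarrow> complex) \<Rightarrow> nat \<Rightarrow> nat \<Rightarrow> complex" where
  "Rbar N R i j = (if i = j then complex_of_real (acoef N R i) else R i j)"

text \<open>F(A) = A^H Rbar_k A for a string A = (s_1,...,s_k); this is real since Rbar is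
  Hermitian, and we take its real part (the imaginary part is 0).\<close>
definition Fval :: "nat \<Rightarrow> (nat \<Rightarrow> nat \<Rightarrow> complex) \<Rightarrow> nat \<Rightarrow> (nat \<Rightarrow> complex) \<Rightarrow> real" where
  "Fval N R k s = Re (\<Sum>i=1..k. \<Sum>j=1..k. cnj (s i) * Rbar N R i j * s j)"

end

theory Submission
  imports Defs
begin

text \<open>Appending a unimodular entry b_n to a string raises F by the new diagonal entry a_n
  plus twice the real part of the cross term conj(b_n) * (sum over j < n of r_nj b_j), whose
  absolute value is at most delta_n.  Since a_n = 2 delta_n + 4 sum_j delta_(n+j), each increment
  lies between 4 sum_j delta_(n+j) and 4 (delta_n + sum_j delta_(n+j)); the theorem follows by
  telescoping from k to l.\<close>

definition qform :: "(nat \<Rightarrow> nat \<Rightarrow> complex) \<Rightarrow> (nat \<Rightarrow> complex) \<Rightarrow> nat \<Rightarrow> real" where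
  "qform M s n = Re (\<Sum>i=1..n. \<Sum>j=1..n. cnj (s i) * M i j * s j)"

definition cross_term :: "(nat \<Rightarrow> nat \<Rightarrow> complex) \<Rightarrow> (nat \<Rightarrow> complex) \<Rightarrow> nat \<Rightarrow> real" where
  "cross_term M s n = Re (\<Sum>j=1..<n. cnj (s n) * M n j * s j)"

lemma sum_square_Suc:
  fixes f :: "nat \<Rightarrow> nat \<Rightarrow> 'a::comm_monoid_add"
  shows "(\<Sum>i=1..Suc m. \<Sum>j=1..Suc m. f i j) = (\<Sum>i=1..m. \<Sum>j=1..m. f i j)
    + (\<Sum>j=1..m. f (Suc m) j) + (\<Sum>i=1..m. f i (Suc m)) + f (Suc m) (Suc m)"
  by (simp add: sum.distrib ac_simps)

lemma qform_Suc:
  assumes herm: "\<forall>i\<in>{1..m}. M i (Suc m) = cnj (M (Suc m) i)"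
  shows "qform M s (Suc m)
    = qform M s m + Re (M (Suc m) (Suc m)) * (cmod (s (Suc m)))\<^sup>2 + 2 * cross_term M s (Suc m)"
proof -
  define f where "f i j = cnj (s i) * M i j * s j" for i j
  have "f i (Suc m) = cnj (f (Suc m) i)" if "i \<in> {1..m}" for i
    using herm that by (simp add: f_def)
  then have column: "Re (\<Sum>i=1..m. f i (Suc m)) = Re (\<Sum>j=1..m. f (Suc m) j)"
    by (simp add: Re_sum)
  have "f (Suc m) (Suc m) = M (Suc m) (Suc m) * of_real ((cmod (s (Suc m)))\<^sup>2)"
    unfolding f_def complex_norm_square by (simp add: ac_simps)
  then have diagonal: "Re (f (Suc m) (Suc m)) = Re (M (Suc m) (Suc m)) * (cmod (s (Suc m)))\<^sup>2"
    by simp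
  have "cross_term M s (Suc m) = Re (\<Sum>j=1..m. f (Suc m) j)"
    by (simp add: cross_term_def f_def atLeastLessThanSuc_atLeastAtMost)
  then show ?thesis
    using column diagonal unfolding qform_def f_def[symmetric] sum_square_Suc by simp
qed

lemma abs_cross_term_le:
  assumes "\<forall>j\<in>{1..n}. cmod (s j) = 1"
  shows "\<bar>cross_term M s n\<bar> \<le> (\<Sum>j=1..<n. cmod (M n j))"
proof -
  have "\<bar>cross_term M s n\<bar> \<le> cmod (\<Sum>j=1..<n. cnj (s n) * M n j * s j)"
    unfolding cross_term_def by (rule abs_Re_le_cmod)
  also have "\<dots> \<le> (\<Sum>j=1..<n. cmod (cnj (s n) * M n j * s j))"
    by (rule norm_sum)
  also have "\<dots> = (\<Sum>j=1..<n. cmod (M n j))"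
    using assms by (intro sum.cong) (auto simp: norm_mult)
  finally show ?thesis .
qed

lemma hermitian_Rbar_column:
  assumes "hermitian_mat N R" and "Suc m \<le> N"
  shows "\<forall>i\<in>{1..m}. Rbar N R i (Suc m) = cnj (Rbar N R (Suc m) i)"
proof
  fix i assume i: "i \<in> {1..m}"
  then have "i \<in> {1..N}" "Suc m \<in> {1..N}"
    using assms(2) by auto
  then have "R i (Suc m) = cnj (R (Suc m) i)"
    using assms(1) unfolding hermitian_mat_def by blast
  then show "Rbar N R i (Suc m) = cnj (Rbar N R (Suc m) i)"
    using i by (simp add: Rbar_def)
qed

lemma sum_cmod_Rbar_row: "(\<Sum>j=1..<n. cmod (Rbar N R n j)) = delta R n"
  unfolding delta_def Rbar_def by (intro sum.cong) auto

lemma Fval_eq_qform: "Fval N R k s = qform (Rbar N R) s k"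
  unfolding Fval_def qform_def ..

lemma Fval_Suc_diff_bounds:
  assumes herm: "hermitian_mat N R" and "Suc m \<le> N"
    and unimod: "\<forall>i\<in>{1..Suc m}. cmod (b i) = 1"
  defines "tail \<equiv> (\<Sum>j=1..N - Suc m. delta R (Suc m + j))"
  shows "4 * tail \<le> Fval N R (Suc m) b - Fval N R m b"
    and "Fval N R (Suc m) b - Fval N R m b \<le> 4 * (delta R (Suc m) + tail)"
proof -
  have "Rbar N R (Suc m) (Suc m) = of_real (acoef N R (Suc m))"
    by (simp add: Rbar_def)
  then have "Fval N R (Suc m) b - Fval N R m b = acoef N R (Suc m) + 2 * cross_term (Rbar N R) b (Suc m)"
    using qform_Suc[OF hermitian_Rbar_column[OF assms(1,2)], of b] unimod
    by (simp add: Fval_eq_qform)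
  moreover have "\<bar>cross_term (Rbar N R) b (Suc m)\<bar> \<le> delta R (Suc m)"
    using abs_cross_term_le[OF unimod, of "Rbar N R"] by (simp only: sum_cmod_Rbar_row)
  ultimately show "4 * tail \<le> Fval N R (Suc m) b - Fval N R m b"
    and "Fval N R (Suc m) b - Fval N R m b \<le> 4 * (delta R (Suc m) + tail)"
    by (auto simp: acoef_def tail_def abs_le_iff)
qed

lemma telescope_Icc:
  fixes F :: "nat \<Rightarrow> 'a::ab_group_add"
  assumes "k \<le> l"
  shows "F l - F k = (\<Sum>i=k+1..l. F i - F (i - 1))"
proof -
  have "F l - F k = (\<Sum>i=k..<l. F (Suc i) - F i)"
    using assms by (simp add: sum_Suc_diff')
  also have "\<dots> = (\<Sum>i=Suc k..<Suc l. F i - F (i - 1))"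
    unfolding sum.shift_bounds_Suc_ivl by simp
  also have "\<dots> = (\<Sum>i=k+1..l. F i - F (i - 1))"
    by (simp add: atLeastLessThanSuc_atLeastAtMost)
  finally show ?thesis .
qed

theorem lemma1:
  fixes N :: nat and R :: "nat \<Rightarrow> nat \<Rightarrow> complex" and b :: "nat \<Rightarrow> complex"
    and k l :: nat
  assumes herm: "hermitian_mat N R"
    and kl: "1 \<le> k" "k \<le> l" "l \<le> N"
    and unimod: "\<forall>i\<in>{1..l}. cmod (b i) = 1"
  shows "4 * (\<Sum>i=k+1..l. \<Sum>j=1..N-i. delta R (i + j)) \<le> Fval N R l b - Fval N R k b
       \<and> Fval N R l b - Fval N R k b
           \<le> 4 * (\<Sum>i=k+1..l. delta R i + (\<Sum>j=1..N-i. delta R (i + j)))"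
proof -
  have step: "4 * (\<Sum>j=1..N-i. delta R (i + j)) \<le> Fval N R i b - Fval N R (i - 1) b
      \<and> Fval N R i b - Fval N R (i - 1) b \<le> 4 * (delta R i + (\<Sum>j=1..N-i. delta R (i + j)))"
    if "i \<in> {k+1..l}" for i
  proof -
    define m where "m = i - 1"
    have i: "i = Suc m" using that by (simp add: m_def)
    show ?thesis
      using Fval_Suc_diff_bounds[OF herm, of m b] that kl unimod unfolding i by auto
  qed
  have diff: "Fval N R l b - Fval N R k b = (\<Sum>i=k+1..l. Fval N R i b - Fval N R (i - 1) b)"
    using kl(2) by (rule telescope_Icc)
  have "(\<Sum>i=k+1..l. 4 * (\<Sum>j=1..N-i. delta R (i + j)))
      \<le> (\<Sum>i=k+1..l. Fval N R i b - Fval N R (i - 1) b)"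
    by (rule sum_mono) (use step in blast)
  moreover have "(\<Sum>i=k+1..l. Fval N R i b - Fval N R (i - 1) b)
      \<le> (\<Sum>i=k+1..l. 4 * (delta R i + (\<Sum>j=1..N-i. delta R (i + j))))"
    by (rule sum_mono) (use step in blast)
  ultimately show ?thesis
    unfolding diff sum_distrib_left by blast
qed

end
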